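(* Consider a sequence $(x^k,y^k)$ generated by Algorithm IP (described in the context). For every $k\geq0$: (1) $q(x^{k+1})\leq q_{\mu_k}(x^{k+1})\leq q_{\mu_k}(x^k)$, and, for $k\geq1$, $q_{\mu_k}(x^k)\leq q_{\mu_{k-1}}(x^k)$; (2) $x^{k+1}$ is $\varepsilon_k$-stationary for $q_{\mu_k}$, i.e. $\operatorname{dist}(0,\hat\partial q_{\mu_k}(x^{k+1}))\leq\varepsilon_k$, and in particular $x^{k+1}$ is strictly feasible: $x^{k+1}\in\operatorname{dom} q$ and $c(x^{k+1})<0$; (3) $y^{k+1}\geq0$; (4) $\operatorname{dist}\bigl(-\nabla c(x^{k+1})^\top y^{k+1},\,\partial q(x^{k+1})\bigr)\leq\varepsilon_k$.
   Context: Setting: $f:\mathbb{R}^n\to\mathbb{R}$ has locally Lipschitz continuous gradient; $g:\mathbb{R}^n\to\mathbb{R}\cup\{\infty\}$ is proper, lower semicontinuous, prox-bounded ($g+\frac{1}{2\gamma}\|\cdot\|^2$ bounded below for some $\gamma>0$; $\gamma_g\in(0,\infty]$ denotes the supremum of such $\gamma$), and continuous relative to $\operatorname{dom} g$ (whenever $\operatorname{dom} g\ni x^k\to x$, $g(x^k)\to g(x)$); $c:\mathbb{R}^n\to\mathbb{R}^m$ has locally Lipschitz continuous Jacobian $\nabla c$. $q=f+g$, $\inf\{q(x): c(x)\le0\}\in\mathbb{R}$, $D=\{x: c(x)<0\}$, $F=\operatorname{dom} q\cap D\neq\emptyset$. The barrier $b:\mathbb{R}\to[0,\infty]$ has $\operatorname{dom}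 b=(-\infty,0)$, is twice continuously differentiable with $b'>0$ there, and $b(t)\to\infty$ as $t\to0^-$. For $\mu>0$: $f_\mu(z)=f(z)+\mu\sum_{i=1}^m b(c_i(z))$ ($=\infty$ outside $D$), $q_\mu=f_\mu+g$. $\hat\partial$ is the regular and $\partial$ the limiting subdifferential. $T_{\mu,\gamma}(z)=\operatorname{prox}_{\gamma g}(z-\gamma\nabla f_\mu(z))$ with $\operatorname{prox}_{\gamma g}(x)=\operatorname{argmin}_w\{g(w)+\frac{1}{2\gamma}\|w-x\|^2\}$. Inner solver IP-FB$(z^0,\mu,\varepsilon)$ (inputs $z^0\in F$, $\mu,\varepsilon>0$; parameters $\gamma_0\in(0,\gamma_g)$, $\alpha,\beta\in(0,1)$): set $j=0$ and start at step 2. Step 1 ($j\geq1$): $\gamma_j\gets\gamma_{j-1}$, $z^j\gets\bar z^{j-1}$. Step 2: compute $\bar z^j\in T_{\mu,\gamma_j}(z^j)$. Step 3: unless (a) $c(\bar z^j)<0$, (b) $q_\mu(\bar z^j)\leq q_\mu(z^j)-\frac{1-\alpha}{2\gamma_j}\|\bar z^j-z^j\|^2$ and (c) $\|\nabla f_\mu(\bar z^j)-\nabla f_\mu(z^j)\|\leq\frac{\alpha}{\gamma_j}\|\bar z^j-z^j\|$ all hold, set $\gamma_j\gets\beta\gamma_j$ and go back to Step 2. Step 4: if $\|\frac{1}{\gamma_j}(z^j-\bar z^j)-\nabla f_\mu(z^j)+\nabla f_\mu(\bar z^j)\|\leq\varepsilon$, return $\bar z^j$. Step 5: $j\gets j+1$,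 go to Step 1. Algorithm IP: inputs $x^0\in F$, tolerances $\epsilon_{\rm p},\epsilon_{\rm d}>0$; parameters $\varepsilon_0,\mu_0>0$, $\theta_\varepsilon,\theta_\mu\in(0,1)$. For $k=0,1,2,\dots$: (i) $x^{k+1}=$ IP-FB$(x^k,\mu_k,\varepsilon_k)$; (ii) $y_i^{k+1}=\mu_k b'(c_i(x^{k+1}))$ for all $i$; (iii) if $\varepsilon_k\leq\epsilon_{\rm d}$ and $\max_i\min\{-c_i(x^{k+1}),y_i^{k+1}\}\leq\epsilon_{\rm p}$, return $(x^{k+1},y^{k+1})$; (iv) choose $0<\varepsilon_{k+1}\leq\max\{\epsilon_{\rm d},\theta_\varepsilon\varepsilon_k\}$ and $0<\mu_{k+1}\leq\theta_\mu\mu_k$. *)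

theory Defs
  imports "HOL-Analysis.Analysis"
begin

definition loc_lipschitz :: "('a::metric_space \<Rightarrow> 'b::metric_space) \<Rightarrow> bool" where
  "loc_lipschitz F \<longleftrightarrow>
     (\<forall>x. \<exists>r>0. \<exists>L. \<forall>u\<in>ball x r. \<forall>v\<in>ball x r. dist (F u) (F v) \<le> L * dist u v)"

definition lsc_fun :: "('a::metric_space \<Rightarrow> ereal) \<Rightarrow> bool" where
  "lsc_fun h \<longleftrightarrow> (\<forall>x X. X \<longlonglongrightarrow> x \<longrightarrow> h x \<le> liminf (\<lambda>k. h (X k)))"

definition proper_fun :: "('a \<Rightarrow> ereal) \<Rightarrow> bool" where
  "proper_fun h \<longleftrightarrow> (\<forall>x. h x \<noteq> -\<infinity>) \<and> (\<exists>x. h x \<noteq> \<infinity>)"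

definition prox_bdd :: "('a::real_normed_vector \<Rightarrow> ereal) \<Rightarrow> real \<Rightarrow> bool" where
  "prox_bdd h \<gamma> \<longleftrightarrow> (\<exists>B::real. \<forall>x. ereal B \<le> h x + ereal ((norm x)\<^sup>2 / (2 * \<gamma>)))"

definition prox_bounded :: "('a::real_normed_vector \<Rightarrow> ereal) \<Rightarrow> bool" where
  "prox_bounded h \<longleftrightarrow> (\<exists>\<gamma>>0. prox_bdd h \<gamma>)"

definition prox_threshold :: "('a::real_normed_vector \<Rightarrow> ereal) \<Rightarrow> ereal" where
  "prox_threshold h = Sup {ereal \<gamma> | \<gamma>. \<gamma> > 0 \<and> prox_bdd h \<gamma>}"

definition cont_rel_dom :: "('a::metric_space \<Rightarrow> ereal) \<Rightarrow> bool" where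
  "cont_rel_dom h \<longleftrightarrow>
     (\<forall>x X. (\<forall>k. h (X k) \<noteq> \<infinity>) \<longrightarrow> X \<longlonglongrightarrow> x \<longrightarrow> (\<lambda>k. h (X k)) \<longlonglongrightarrow> h x)"

text \<open>Regular (Frechet) subdifferential: v such that
  liminf_{z \<rightarrow> x, z \<noteq> x} (h z - h x - <v, z - x>) / norm (z - x) \<ge> 0, with h x finite.\<close>
definition regular_subdiff :: "('a::real_inner \<Rightarrow> ereal) \<Rightarrow> 'a \<Rightarrow> 'a set" where
  "regular_subdiff h x = {v. \<bar>h x\<bar> \<noteq> \<infinity> \<and>
     (\<forall>e>0. \<exists>d>0. \<forall>z. norm (z - x) < d \<longrightarrow>
        h x + ereal (inner v (z - x) - e * norm (z - x)) \<le> h z)}"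

definition limiting_subdiff :: "('a::real_inner \<Rightarrow> ereal) \<Rightarrow> 'a \<Rightarrow> 'a set" where
  "limiting_subdiff h x = {v. \<exists>X V. X \<longlonglongrightarrow> x \<and> (\<lambda>k. h (X k)) \<longlonglongrightarrow> h x \<and>
     (\<forall>k. V k \<in> regular_subdiff h (X k)) \<and> V \<longlonglongrightarrow> v}"

text \<open>dist(p, S) \<le> e with the convention dist(p, {}) = \<infinity>\<close>
definition dist_set_le :: "'a::metric_space \<Rightarrow> 'a set \<Rightarrow> real \<Rightarrow> bool" where
  "dist_set_le p S e \<longleftrightarrow> S \<noteq> {} \<and> infdist p S \<le> e"

definition prox_set :: "('a::real_normed_vector \<Rightarrow> ereal) \<Rightarrow> real \<Rightarrow> 'a \<Rightarrow> 'a set" where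
  "prox_set h \<gamma> x = {w. \<forall>v. h w + ereal ((norm (w - x))\<^sup>2 / (2 * \<gamma>))
                            \<le> h v + ereal ((norm (v - x))\<^sup>2 / (2 * \<gamma>))}"

definition strict_feas :: "nat \<Rightarrow> (nat \<Rightarrow> 'a \<Rightarrow> real) \<Rightarrow> 'a \<Rightarrow> bool" where
  "strict_feas m c x \<longleftrightarrow> (\<forall>i<m. c i x < 0)"

definition qfun :: "('a \<Rightarrow> real) \<Rightarrow> ('a \<Rightarrow> ereal) \<Rightarrow> 'a \<Rightarrow> ereal" where
  "qfun f g x = ereal (f x) + g x"

definition fmu :: "('a \<Rightarrow> real) \<Rightarrow> nat \<Rightarrow> (nat \<Rightarrow> 'a \<Rightarrow> real) \<Rightarrow> (real \<Rightarrow> real)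
                    \<Rightarrow> real \<Rightarrow> 'a \<Rightarrow> ereal" where
  "fmu f m c b \<mu> z = (if strict_feas m c z then ereal (f z + \<mu> * (\<Sum>i<m. b (c i z))) else \<infinity>)"

definition qmu :: "('a \<Rightarrow> real) \<Rightarrow> ('a \<Rightarrow> ereal) \<Rightarrow> nat \<Rightarrow> (nat \<Rightarrow> 'a \<Rightarrow> real) \<Rightarrow> (real \<Rightarrow> real)
                    \<Rightarrow> real \<Rightarrow> 'a \<Rightarrow> ereal" where
  "qmu f g m c b \<mu> z = fmu f m c b \<mu> z + g z"

definition grad_fmu :: "('a \<Rightarrow> 'a::real_vector) \<Rightarrow> nat \<Rightarrow> (nat \<Rightarrow> 'a \<Rightarrow> real) \<Rightarrow> (nat \<Rightarrow> 'a \<Rightarrow> 'a)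
                        \<Rightarrow> (real \<Rightarrow> real) \<Rightarrow> real \<Rightarrow> 'a \<Rightarrow> 'a" where
  "grad_fmu gf m c gc db \<mu> z = gf z + \<mu> *\<^sub>R (\<Sum>i<m. db (c i z) *\<^sub>R gc i z)"

section \<open>Inner solver IP-FB (for generic qm = q_mu, G = grad f_mu, feasibility test)\<close>

definition Tmap :: "('a::real_normed_vector \<Rightarrow> ereal) \<Rightarrow> ('a \<Rightarrow> 'a) \<Rightarrow> real \<Rightarrow> 'a \<Rightarrow> 'a set" where
  "Tmap g G \<gamma> z = prox_set g \<gamma> (z - \<gamma> *\<^sub>R G z)"

definition fb_accept :: "('a::real_normed_vector \<Rightarrow> bool) \<Rightarrow> ('a \<Rightarrow> ereal) \<Rightarrow> ('a \<Rightarrow> 'a)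
                         \<Rightarrow> real \<Rightarrow> real \<Rightarrow> 'a \<Rightarrow> 'a \<Rightarrow> bool" where
  "fb_accept feas qm G \<alpha> \<gamma> z w \<longleftrightarrow>
     feas w \<and>
     qm w \<le> qm z - ereal ((1 - \<alpha>) / (2 * \<gamma>) * (norm (w - z))\<^sup>2) \<and>
     norm (G w - G z) \<le> \<alpha> / \<gamma> * norm (w - z)"

definition fb_backtrack :: "('a::real_normed_vector \<Rightarrow> bool) \<Rightarrow> ('a \<Rightarrow> ereal) \<Rightarrow> ('a \<Rightarrow> ereal)
      \<Rightarrow> ('a \<Rightarrow> 'a) \<Rightarrow> real \<Rightarrow> real \<Rightarrow> real \<Rightarrow> 'a \<Rightarrow> real \<Rightarrow> 'a \<Rightarrow> bool" where
  "fb_backtrack feas qm g G \<alpha> \<beta> \<gamma>in z \<gamma>out w \<longleftrightarrow>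
     (\<exists>l::nat. \<gamma>out = \<beta> ^ l * \<gamma>in \<and> w \<in> Tmap g G \<gamma>out z \<and> fb_accept feas qm G \<alpha> \<gamma>out z w \<and>
        (\<forall>i<l. \<exists>w'. w' \<in> Tmap g G (\<beta> ^ i * \<gamma>in) z \<and> \<not> fb_accept feas qm G \<alpha> (\<beta> ^ i * \<gamma>in) z w'))"

definition fb_stop :: "('a::real_normed_vector \<Rightarrow> 'a) \<Rightarrow> real \<Rightarrow> 'a \<Rightarrow> 'a \<Rightarrow> real \<Rightarrow> bool" where
  "fb_stop G \<gamma> z w \<epsilon> \<longleftrightarrow> norm ((1 / \<gamma>) *\<^sub>R (z - w) - G z + G w) \<le> \<epsilon>"

text \<open>x is a possible return value of IP-FB(z0, mu, eps): a run with iterates z j, trial outputs zb j,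
  accepted stepsizes gam j, stopping at iteration J.\<close>
definition ipfb_returns :: "('a::real_normed_vector \<Rightarrow> bool) \<Rightarrow> ('a \<Rightarrow> ereal) \<Rightarrow> ('a \<Rightarrow> ereal)
      \<Rightarrow> ('a \<Rightarrow> 'a) \<Rightarrow> real \<Rightarrow> real \<Rightarrow> real \<Rightarrow> 'a \<Rightarrow> real \<Rightarrow> 'a \<Rightarrow> bool" where
  "ipfb_returns feas qm g G \<gamma>0 \<alpha> \<beta> z0 \<epsilon> x \<longleftrightarrow>
     (\<exists>J::nat. \<exists>z zb gam.
        z 0 = z0 \<and>
        (\<forall>j\<le>J. fb_backtrack feas qm g G \<alpha> \<beta> (if j = 0 then \<gamma>0 else gam (j - 1)) (z j) (gam j) (zb j)) \<and>
        (\<forall>j<J. \<not> fb_stop G (gam j) (z j) (zb j) \<epsilon> \<and> z (Suc j) = zb j) \<and>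
        fb_stop G (gam J) (z J) (zb J) \<epsilon> \<and>
        x = zb J)"

end

theory Submission
  imports Defs
begin

text \<open>Every step accepted by the inner solver is a strictly feasible descent step for \<open>q\<^sub>\<mu>\<close>,
  so all iterates stay in \<open>dom q \<inter> D\<close> and \<open>q\<^sub>\<mu>(x\<^sup>k\<^sup>+\<^sup>1) \<le> q\<^sub>\<mu>(x\<^sup>k)\<close>; since the barrier is
  nonnegative on \<open>D\<close>, \<open>q\<^sub>\<mu>\<close> dominates \<open>q\<close> and increases with \<open>\<mu>\<close>. For stationarity, the
  optimality condition of the proximal step \<open>w \<in> T\<^sub>\<mu>\<^sub>,\<^sub>\<gamma>(z)\<close> says that
  \<open>(z - w)/\<gamma> - \<nabla>f\<^sub>\<mu>(z)\<close> is a regular subgradient of \<open>g\<close> at \<open>w\<close>; adding the gradient of the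
  smooth part at \<open>w\<close> gives a regular subgradient of \<open>q\<^sub>\<mu>\<close> whose norm is exactly the quantity
  tested in the stopping rule. Adding \<open>\<nabla>f(w)\<close> instead gives a subgradient of \<open>q\<close>, which differs
  from \<open>-\<nabla>c(w)\<^sup>T y\<close> by the same vector because \<open>y\<^sub>i = \<mu> b'(c\<^sub>i(w))\<close>.\<close>

lemma dist_set_leI:
  assumes "v \<in> S" "dist p v \<le> e"
  shows "dist_set_le p S e"
  using assms infdist_le[of v S p] unfolding dist_set_le_def by auto

lemma regular_subdiff_subset_limiting_subdiff:
  "regular_subdiff h x \<subseteq> limiting_subdiff h x"
proof
  fix v
  assume "v \<in> regular_subdiff h x"
  then show "v \<in> limiting_subdiff h x"
    unfolding limiting_subdiff_def by (intro CollectI exI[of _ "\<lambda>_. x"] exI[of _ "\<lambda>_. v"]) simp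
qed

lemma prox_set_quadratic_minorant:
  fixes g :: "'a::real_inner \<Rightarrow> ereal"
  assumes w: "w \<in> prox_set g \<gamma> a" and \<gamma>: "0 < \<gamma>" and gw: "\<bar>g w\<bar> \<noteq> \<infinity>"
  shows "g w + ereal (inner ((1 / \<gamma>) *\<^sub>R (a - w)) (u - w) - (norm (u - w))\<^sup>2 / (2 * \<gamma>)) \<le> g u"
proof -
  have prox: "g w + ereal ((norm (w - a))\<^sup>2 / (2 * \<gamma>)) \<le> g u + ereal ((norm (u - a))\<^sup>2 / (2 * \<gamma>))"
    using w unfolding prox_set_def by blast
  have "inner (w - a) (u - w) = ((norm (u - a))\<^sup>2 - (norm (w - a))\<^sup>2 - (norm (u - w))\<^sup>2) / 2"
    using dot_norm[of "w - a" "u - w"] by simp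
  then have "(norm (w - a))\<^sup>2 / (2 * \<gamma>) - (norm (u - a))\<^sup>2 / (2 * \<gamma>)
      = - inner (w - a) (u - w) / \<gamma> - (norm (u - w))\<^sup>2 / (2 * \<gamma>)"
    using \<gamma> by (simp add: field_simps)
  also have "- inner (w - a) (u - w) / \<gamma> = inner ((1 / \<gamma>) *\<^sub>R (a - w)) (u - w)"
    by (simp add: inner_diff_left)
  finally have "(norm (w - a))\<^sup>2 / (2 * \<gamma>) - (norm (u - a))\<^sup>2 / (2 * \<gamma>)
      = inner ((1 / \<gamma>) *\<^sub>R (a - w)) (u - w) - (norm (u - w))\<^sup>2 / (2 * \<gamma>)" .
  with prox gw show ?thesis
    by (cases "g w"; cases "g u") auto
qed

lemma prox_set_regular_subdiff:
  fixes g :: "'a::real_inner \<Rightarrow> ereal"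
  assumes w: "w \<in> prox_set g \<gamma> a" and \<gamma>: "0 < \<gamma>" and gw: "\<bar>g w\<bar> \<noteq> \<infinity>"
  shows "(1 / \<gamma>) *\<^sub>R (a - w) \<in> regular_subdiff g w"
  unfolding regular_subdiff_def
proof (intro CollectI conjI allI impI)
  fix e :: real
  assume e: "e > 0"
  let ?p = "(1 / \<gamma>) *\<^sub>R (a - w)"
  have "g w + ereal (inner ?p (u - w) - e * norm (u - w)) \<le> g u"
    if u: "norm (u - w) < 2 * \<gamma> * e" for u
  proof -
    have "(norm (u - w))\<^sup>2 \<le> norm (u - w) * (2 * \<gamma> * e)"
      unfolding power2_eq_square using u by (intro mult_left_mono) auto
    then have "(norm (u - w))\<^sup>2 / (2 * \<gamma>) \<le> e * norm (u - w)"
      using \<gamma> by (simp add: field_simps)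
    then have "g w + ereal (inner ?p (u - w) - e * norm (u - w))
        \<le> g w + ereal (inner ?p (u - w) - (norm (u - w))\<^sup>2 / (2 * \<gamma>))"
      by (intro add_left_mono) simp
    also have "\<dots> \<le> g u" by (rule prox_set_quadratic_minorant[OF w \<gamma> gw])
    finally show ?thesis .
  qed
  then show "\<exists>d>0. \<forall>u. norm (u - w) < d \<longrightarrow> g w + ereal (inner ?p (u - w) - e * norm (u - w)) \<le> g u"
    using \<gamma> e by (intro exI[of _ "2 * \<gamma> * e"]) auto
qed (use gw in simp)

lemma regular_subdiff_add_differentiable:
  fixes h H :: "'a::real_inner \<Rightarrow> ereal"
  assumes p: "p \<in> regular_subdiff h w"
    and F: "(F has_derivative (\<lambda>v. inner v D)) (at w)"
    and S: "open S" "w \<in> S" and H: "\<And>u. u \<in> S \<Longrightarrow> H u = ereal (F u) + h u"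
  shows "p + D \<in> regular_subdiff H w"
  unfolding regular_subdiff_def
proof (intro CollectI conjI allI impI)
  have hw: "\<bar>h w\<bar> \<noteq> \<infinity>" using p unfolding regular_subdiff_def by simp
  then show "\<bar>H w\<bar> \<noteq> \<infinity>" using H[OF S(2)] by auto
  fix e :: real
  assume e: "e > 0"
  obtain r where r: "r > 0" "ball w r \<subseteq> S" using S openE by blast
  have "\<forall>e>0. \<exists>d>0. \<forall>z. norm (z - w) < d \<longrightarrow> h w + ereal (inner p (z - w) - e * norm (z - w)) \<le> h z"
    using p unfolding regular_subdiff_def by simp
  then obtain d1 where d1: "d1 > 0"
    "\<And>z. norm (z - w) < d1 \<Longrightarrow> h w + ereal (inner p (z - w) - e/2 * norm (z - w)) \<le> h z"
    using e by (meson half_gt_zero)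
  have "\<forall>e>0. \<exists>d>0. \<forall>z. norm (z - w) < d \<longrightarrow> norm (F z - F w - inner (z - w) D) \<le> e * norm (z - w)"
    using F unfolding has_derivative_at_alt by blast
  then obtain d2 where d2: "d2 > 0"
    "\<And>z. norm (z - w) < d2 \<Longrightarrow> norm (F z - F w - inner (z - w) D) \<le> e/2 * norm (z - w)"
    using e by (meson half_gt_zero)
  have "H w + ereal (inner (p + D) (z - w) - e * norm (z - w)) \<le> H z"
    if z: "norm (z - w) < min r (min d1 d2)" for z
  proof -
    have zS: "z \<in> S" using z r by (auto simp: dist_norm norm_minus_commute)
    have "F w + inner (z - w) D - e/2 * norm (z - w) \<le> F z"
      using d2(2)[of z] z by (smt (verit) real_norm_def min_less_iff_conj)
    moreover have "h w + ereal (inner p (z - w) - e/2 * norm (z - w)) \<le> h z"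
      using d1(2)[of z] z by simp
    ultimately have "ereal (F w + inner (z - w) D - e/2 * norm (z - w))
        + (h w + ereal (inner p (z - w) - e/2 * norm (z - w))) \<le> ereal (F z) + h z"
      by (intro add_mono) simp_all
    moreover have "ereal (F w + inner (z - w) D - e/2 * norm (z - w))
        + (h w + ereal (inner p (z - w) - e/2 * norm (z - w)))
        = H w + ereal (inner (p + D) (z - w) - e * norm (z - w))"
      using hw unfolding H[OF S(2)] by (cases "h w") (simp_all add: inner_add_left inner_commute[of "z - w"])
    ultimately show ?thesis using H[OF zS] by simp
  qed
  then show "\<exists>d>0. \<forall>z. norm (z - w) < d \<longrightarrow> H w + ereal (inner (p + D) (z - w) - e * norm (z - w)) \<le> H z"
    using r d1 d2 by (intro exI[of _ "min r (min d1 d2)"]) auto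
qed

lemma Tmap_residual_regular_subdiff:
  fixes g H :: "'a::real_inner \<Rightarrow> ereal"
  assumes w: "w \<in> Tmap g G \<gamma> z" and \<gamma>: "0 < \<gamma>" and gw: "\<bar>g w\<bar> \<noteq> \<infinity>"
    and F: "(F has_derivative (\<lambda>v. inner v D)) (at w)"
    and S: "open S" "w \<in> S" and H: "\<And>u. u \<in> S \<Longrightarrow> H u = ereal (F u) + g u"
  shows "(1 / \<gamma>) *\<^sub>R (z - w) - G z + D \<in> regular_subdiff H w"
proof -
  have "(1 / \<gamma>) *\<^sub>R ((z - \<gamma> *\<^sub>R G z) - w) \<in> regular_subdiff g w"
    using w \<gamma> gw unfolding Tmap_def by (intro prox_set_regular_subdiff)
  from regular_subdiff_add_differentiable[OF this F S H]
  show ?thesis using \<gamma> by (simp add: algebra_simps scaleR_diff_right)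
qed

lemma fb_accept_imp_le:
  assumes "fb_accept feas qm G \<alpha> \<gamma> u w" "0 < \<gamma>" "\<alpha> < 1"
  shows "qm w \<le> qm u"
proof -
  have "qm w \<le> qm u - ereal ((1 - \<alpha>) / (2 * \<gamma>) * (norm (w - u))\<^sup>2)"
    using assms(1) unfolding fb_accept_def by blast
  also have "\<dots> \<le> qm u" using assms(2,3) by (cases "qm u") auto
  finally show ?thesis .
qed

lemma fb_backtrack_accepted:
  assumes "fb_backtrack feas qm g G \<alpha> \<beta> \<gamma>in z \<gamma>out w" "0 < \<gamma>in" "0 < \<beta>"
  shows "0 < \<gamma>out \<and> w \<in> Tmap g G \<gamma>out z \<and> fb_accept feas qm G \<alpha> \<gamma>out z w"
  using assms unfolding fb_backtrack_def by auto

lemma ipfb_returns_final_step: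
  assumes R: "ipfb_returns feas qm g G \<gamma>0 \<alpha> \<beta> z0 \<epsilon> x"
    and "0 < \<gamma>0" "\<alpha> < 1" "0 < \<beta>"
  obtains \<gamma> z where "0 < \<gamma>" "x \<in> Tmap g G \<gamma> z" "fb_accept feas qm G \<alpha> \<gamma> z x"
    "fb_stop G \<gamma> z x \<epsilon>" "qm z \<le> qm z0"
proof -
  from R obtain J z zb gam where
    z0: "z 0 = z0" and
    bt: "\<And>j. j \<le> J \<Longrightarrow> fb_backtrack feas qm g G \<alpha> \<beta> (if j = 0 then \<gamma>0 else gam (j - 1)) (z j) (gam j) (zb j)" and
    step: "\<And>j. j < J \<Longrightarrow> z (Suc j) = zb j" and
    stop: "fb_stop G (gam J) (z J) (zb J) \<epsilon>" and x: "x = zb J"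
    unfolding ipfb_returns_def by blast
  have inv: "0 < gam j \<and> fb_accept feas qm G \<alpha> (gam j) (z j) (zb j)
      \<and> zb j \<in> Tmap g G (gam j) (z j) \<and> qm (z j) \<le> qm z0" if "j \<le> J" for j
    using that
  proof (induction j)
    case 0
    then show ?case using fb_backtrack_accepted[OF bt] assms(2,4) z0 by fastforce
  next
    case (Suc j)
    then have IH: "0 < gam j" "fb_accept feas qm G \<alpha> (gam j) (z j) (zb j)" "qm (z j) \<le> qm z0"
      by auto
    have "qm (z (Suc j)) \<le> qm (z j)"
      using step[of j] Suc.prems fb_accept_imp_le[OF IH(2,1) assms(3)] by simp
    with IH show ?case using fb_backtrack_accepted[OF bt[OF Suc.prems]] assms(4) by auto
  qed
  show thesis using that inv[of J] stop x by blast
qed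

lemma ipfb_returns_descent:
  assumes "ipfb_returns feas qm g G \<gamma>0 \<alpha> \<beta> z0 \<epsilon> x" "0 < \<gamma>0" "\<alpha> < 1" "0 < \<beta>"
  shows "feas x \<and> qm x \<le> qm z0"
proof -
  obtain \<gamma> z where "0 < \<gamma>" "fb_accept feas qm G \<alpha> \<gamma> z x" "qm z \<le> qm z0"
    using ipfb_returns_final_step[OF assms] by blast
  then show ?thesis
    using fb_accept_imp_le[of feas qm G \<alpha> \<gamma> z x] assms(3) unfolding fb_accept_def by auto
qed

lemma open_strict_feas:
  fixes c :: "nat \<Rightarrow> 'a::real_inner \<Rightarrow> real"
  assumes "\<And>i z. i < m \<Longrightarrow> GDERIV (c i) z :> gc i z"
  shows "open {z. strict_feas m c z}"
proof -
  have "continuous_on UNIV (c i)" if "i < m" for i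
    using assms[OF that] unfolding gderiv_def
    by (blast intro: continuous_at_imp_continuous_on has_derivative_continuous)
  moreover have "{z. strict_feas m c z} = (\<Inter>i\<in>{..<m}. {z. c i z < 0})"
    unfolding strict_feas_def by auto
  ultimately show ?thesis
    by (auto intro!: open_Collect_less continuous_on_const)
qed

lemma barrier_objective_has_derivative:
  fixes f :: "'a::real_inner \<Rightarrow> real"
  assumes f: "\<And>z. GDERIV f z :> gf z"
    and c: "\<And>i z. i < m \<Longrightarrow> GDERIV (c i) z :> gc i z"
    and b: "\<And>t. t < 0 \<Longrightarrow> (b has_real_derivative db t) (at t)"
    and w: "strict_feas m c w"
  shows "((\<lambda>z. f z + \<mu> * (\<Sum>i<m. b (c i z))) has_derivative
           (\<lambda>v. inner v (grad_fmu gf m c gc db \<mu> w))) (at w)"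
proof -
  have "((\<lambda>z. b (c i z)) has_derivative (\<lambda>v. db (c i w) * inner v (gc i w))) (at w)" if "i < m" for i
  proof -
    have "(c i has_derivative (\<lambda>v. inner v (gc i w))) (at w)"
      using c[OF that] unfolding gderiv_def .
    moreover have "(b has_derivative (*) (db (c i w))) (at (c i w))"
      using b[of "c i w"] w that unfolding strict_feas_def has_field_derivative_def by auto
    ultimately show ?thesis by (rule has_derivative_compose)
  qed
  moreover have "(f has_derivative (\<lambda>v. inner v (gf w))) (at w)"
    using f[of w] unfolding gderiv_def .
  ultimately have "((\<lambda>z. f z + \<mu> * (\<Sum>i<m. b (c i z))) has_derivative
        (\<lambda>v. inner v (gf w) + \<mu> * (\<Sum>i<m. db (c i w) * inner v (gc i w)))) (at w)"
    by (intro has_derivative_add has_derivative_mult_right has_derivative_sum) auto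
  then show ?thesis
    by (simp add: grad_fmu_def inner_add_right inner_sum_right)
qed

lemma qmu_strict_feas:
  "strict_feas m c z \<Longrightarrow> qmu f g m c b \<mu> z = ereal (f z + \<mu> * (\<Sum>i<m. b (c i z))) + g z"
  unfolding qmu_def fmu_def by simp

lemma qmu_not_infinity_iff:
  "qmu f g m c b \<mu> z \<noteq> \<infinity> \<longleftrightarrow> strict_feas m c z \<and> g z \<noteq> \<infinity>"
  unfolding qmu_def fmu_def by (cases "g z") auto

lemma qmu_mono_barrier_weight:
  assumes z: "strict_feas m c z" and b: "\<And>t. t < 0 \<Longrightarrow> 0 \<le> b t" and "\<mu> \<le> \<mu>'"
  shows "qmu f g m c b \<mu> z \<le> qmu f g m c b \<mu>' z"
proof -
  have "0 \<le> (\<Sum>i<m. b (c i z))"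
    using z b unfolding strict_feas_def by (intro sum_nonneg) auto
  then have "f z + \<mu> * (\<Sum>i<m. b (c i z)) \<le> f z + \<mu>' * (\<Sum>i<m. b (c i z))"
    using assms(3) by (simp add: mult_right_mono)
  then show ?thesis
    unfolding qmu_strict_feas[OF z] by (intro add_right_mono) simp
qed

lemma qfun_le_qmu:
  assumes "strict_feas m c z" "\<And>t. t < 0 \<Longrightarrow> 0 \<le> b t" "0 \<le> \<mu>"
  shows "qfun f g z \<le> qmu f g m c b \<mu> z"
  using qmu_mono_barrier_weight[OF assms] qmu_strict_feas[OF assms(1)]
  by (simp add: qfun_def)

lemma qmu_descent_stays_in_dom:
  assumes "strict_feas m c (x 0)" "g (x 0) \<noteq> \<infinity>"
    and descent: "\<And>j. j < n \<Longrightarrow>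
      strict_feas m c (x (Suc j)) \<and> qmu f g m c b (mu j) (x (Suc j)) \<le> qmu f g m c b (mu j) (x j)"
    and "j \<le> n"
  shows "strict_feas m c (x j) \<and> g (x j) \<noteq> \<infinity>"
  using \<open>j \<le> n\<close>
proof (induction j)
  case 0
  then show ?case using assms(1,2) by simp
next
  case (Suc j)
  then have "qmu f g m c b (mu j) (x j) \<noteq> \<infinity>" by (simp add: qmu_not_infinity_iff)
  with descent[of j] Suc.prems show ?case
    using qmu_not_infinity_iff[of f g m c b "mu j" "x (Suc j)"] by (auto simp: top_unique)
qed

lemma ipfb_returns_barrier_stationary:
  fixes f :: "'a::real_inner \<Rightarrow> real"
  assumes R: "ipfb_returns (strict_feas m c) (qmu f g m c b \<mu>) g (grad_fmu gf m c gc db \<mu>)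
                \<gamma>0 \<alpha> \<beta> z0 \<epsilon> w"
    and params: "0 < \<gamma>0" "\<alpha> < 1" "0 < \<beta>" and gw: "\<bar>g w\<bar> \<noteq> \<infinity>"
    and f: "\<And>z. GDERIV f z :> gf z"
    and c: "\<And>i z. i < m \<Longrightarrow> GDERIV (c i) z :> gc i z"
    and b: "\<And>t. t < 0 \<Longrightarrow> (b has_real_derivative db t) (at t)"
  shows "dist_set_le 0 (regular_subdiff (qmu f g m c b \<mu>) w) \<epsilon>"
    and "dist_set_le (- (\<mu> *\<^sub>R (\<Sum>i<m. db (c i w) *\<^sub>R gc i w)))
           (limiting_subdiff (qfun f g) w) \<epsilon>"
proof -
  let ?G = "grad_fmu gf m c gc db \<mu>"
  obtain \<gamma> z where \<gamma>: "0 < \<gamma>" and wT: "w \<in> Tmap g ?G \<gamma> z"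
    and acc: "fb_accept (strict_feas m c) (qmu f g m c b \<mu>) ?G \<alpha> \<gamma> z w"
    and stop: "fb_stop ?G \<gamma> z w \<epsilon>"
    using ipfb_returns_final_step[OF R params] by blast
  have feas: "strict_feas m c w" using acc unfolding fb_accept_def by blast
  let ?r = "(1 / \<gamma>) *\<^sub>R (z - w) - ?G z"
  have residual_small: "norm (?r + ?G w) \<le> \<epsilon>"
    using stop unfolding fb_stop_def by (simp add: algebra_simps)
  have "?r + ?G w \<in> regular_subdiff (qmu f g m c b \<mu>) w"
  proof (rule Tmap_residual_regular_subdiff[OF wT \<gamma> gw])
    show "((\<lambda>z. f z + \<mu> * (\<Sum>i<m. b (c i z))) has_derivative (\<lambda>v. inner v (?G w))) (at w)"
      by (rule barrier_objective_has_derivative[OF f c b feas])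
    show "open {z. strict_feas m c z}" by (rule open_strict_feas[OF c])
  qed (use feas qmu_strict_feas in auto)
  with residual_small show "dist_set_le 0 (regular_subdiff (qmu f g m c b \<mu>) w) \<epsilon>"
    by (intro dist_set_leI) simp_all
  have "?r + gf w \<in> regular_subdiff (qfun f g) w"
    using Tmap_residual_regular_subdiff[OF wT \<gamma> gw _ open_UNIV, of f "gf w" "qfun f g"] f[of w]
    unfolding gderiv_def qfun_def by blast
  then have "?r + gf w \<in> limiting_subdiff (qfun f g) w"
    using regular_subdiff_subset_limiting_subdiff by blast
  moreover have "dist (- (\<mu> *\<^sub>R (\<Sum>i<m. db (c i w) *\<^sub>R gc i w))) (?r + gf w) \<le> \<epsilon>"
  proof -
    have "- (\<mu> *\<^sub>R (\<Sum>i<m. db (c i w) *\<^sub>R gc i w)) - (?r + gf w) = - (?r + ?G w)"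
      unfolding grad_fmu_def by (simp add: algebra_simps)
    then show ?thesis
      unfolding dist_norm using residual_small by (metis norm_minus_cancel)
  qed
  ultimately show "dist_set_le (- (\<mu> *\<^sub>R (\<Sum>i<m. db (c i w) *\<^sub>R gc i w)))
      (limiting_subdiff (qfun f g) w) \<epsilon>"
    by (rule dist_set_leI)
qed

theorem lemma4p1:
  fixes f :: "real^'n \<Rightarrow> real" and gf :: "real^'n \<Rightarrow> real^'n"
    and g :: "real^'n \<Rightarrow> ereal"
    and m :: nat and c :: "nat \<Rightarrow> real^'n \<Rightarrow> real" and gc :: "nat \<Rightarrow> real^'n \<Rightarrow> real^'n"
    and b db d2b :: "real \<Rightarrow> real"
    and \<gamma>0 \<alpha> \<beta> \<epsilon>p \<epsilon>d \<theta>\<epsilon> \<theta>\<mu> :: real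
    and x :: "nat \<Rightarrow> real^'n" and y :: "nat \<Rightarrow> nat \<Rightarrow> real"
    and eps mu :: "nat \<Rightarrow> real" and k :: nat
  assumes f_grad: "\<And>z. GDERIV f z :> gf z" and gf_lip: "loc_lipschitz gf"
    and g_proper: "proper_fun g" and g_lsc: "lsc_fun g" and g_pb: "prox_bounded g"
    and g_cont: "cont_rel_dom g"
    and c_grad: "\<And>i z. i < m \<Longrightarrow> GDERIV (c i) z :> gc i z"
    and gc_lip: "\<And>i. i < m \<Longrightarrow> loc_lipschitz (gc i)"
    and inf_fin: "\<bar>Inf (qfun f g ` {z. \<forall>i<m. c i z \<le> 0})\<bar> \<noteq> \<infinity>"
    and F_ne: "\<exists>z. qfun f g z \<noteq> \<infinity> \<and> strict_feas m c z"
    and b_nonneg: "\<And>t. t < 0 \<Longrightarrow> 0 \<le> b t"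
    and b_deriv: "\<And>t. t < 0 \<Longrightarrow> (b has_real_derivative db t) (at t)"
    and db_deriv: "\<And>t. t < 0 \<Longrightarrow> (db has_real_derivative d2b t) (at t)"
    and d2b_cont: "continuous_on {..<0} d2b"
    and db_pos: "\<And>t. t < 0 \<Longrightarrow> db t > 0"
    and b_blowup: "filterlim b at_top (at_left 0)"
    and \<gamma>0: "0 < \<gamma>0" "ereal \<gamma>0 < prox_threshold g"
    and \<alpha>: "0 < \<alpha>" "\<alpha> < 1" and \<beta>: "0 < \<beta>" "\<beta> < 1"
    and tol: "0 < \<epsilon>p" "0 < \<epsilon>d"
    and \<theta>: "0 < \<theta>\<epsilon>" "\<theta>\<epsilon> < 1" "0 < \<theta>\<mu>" "\<theta>\<mu> < 1"
    and x0: "qfun f g (x 0) \<noteq> \<infinity>" "strict_feas m c (x 0)"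
    and init: "0 < eps 0" "0 < mu 0"
    and inner: "\<And>j. j \<le> k \<Longrightarrow>
        ipfb_returns (strict_feas m c) (qmu f g m c b (mu j)) g (grad_fmu gf m c gc db (mu j))
                     \<gamma>0 \<alpha> \<beta> (x j) (eps j) (x (Suc j))"
    and mult: "\<And>j i. j \<le> k \<Longrightarrow> y (Suc j) i = mu j * db (c i (x (Suc j)))"
    and no_stop: "\<And>j. j < k \<Longrightarrow>
        \<not> (eps j \<le> \<epsilon>d \<and> (\<forall>i<m. min (- c i (x (Suc j))) (y (Suc j) i) \<le> \<epsilon>p))"
    and upd: "\<And>j. j < k \<Longrightarrow> 0 < eps (Suc j) \<and> eps (Suc j) \<le> max \<epsilon>d (\<theta>\<epsilon> * eps j)
                              \<and> 0 < mu (Suc j) \<and> mu (Suc j) \<le> \<theta>\<mu> * mu j"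
  shows "qfun f g (x (Suc k)) \<le> qmu f g m c b (mu k) (x (Suc k))
       \<and> qmu f g m c b (mu k) (x (Suc k)) \<le> qmu f g m c b (mu k) (x k)
       \<and> (k \<ge> 1 \<longrightarrow> qmu f g m c b (mu k) (x k) \<le> qmu f g m c b (mu (k - 1)) (x k))
       \<and> dist_set_le 0 (regular_subdiff (qmu f g m c b (mu k)) (x (Suc k))) (eps k)
       \<and> qfun f g (x (Suc k)) \<noteq> \<infinity> \<and> strict_feas m c (x (Suc k))
       \<and> (\<forall>i<m. y (Suc k) i \<ge> 0)
       \<and> dist_set_le (- (\<Sum>i<m. y (Suc k) i *\<^sub>R gc i (x (Suc k))))
                     (limiting_subdiff (qfun f g) (x (Suc k))) (eps k)"
proof -
  let ?Q = "\<lambda>j. qmu f g m c b (mu j)"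
  have mu_pos: "0 < mu j" if "j \<le> k" for j
    using that init(2) upd by (cases j) auto
  have descent: "strict_feas m c (x (Suc j)) \<and> ?Q j (x (Suc j)) \<le> ?Q j (x j)" if "j \<le> k" for j
    by (rule ipfb_returns_descent[OF inner[OF that] \<gamma>0(1) \<alpha>(2) \<beta>(1)])
  have dom: "strict_feas m c (x j) \<and> g (x j) \<noteq> \<infinity>" if "j \<le> Suc k" for j
    using qmu_descent_stays_in_dom[of m c x g "Suc k" f b mu j] x0 descent that
    by (simp add: qfun_def less_Suc_eq_le)
  let ?w = "x (Suc k)"
  have w: "strict_feas m c ?w" "g ?w \<noteq> \<infinity>"
    using dom[of "Suc k"] by auto
  then have g_w: "\<bar>g ?w\<bar> \<noteq> \<infinity>"
    using g_proper unfolding proper_fun_def by auto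
  have y_sum: "(\<Sum>i<m. y (Suc k) i *\<^sub>R gc i ?w) = mu k *\<^sub>R (\<Sum>i<m. db (c i ?w) *\<^sub>R gc i ?w)"
    using mult[of k] by (simp add: scaleR_sum_right)
  have "?Q k (x k) \<le> ?Q (k - 1) (x k)" if "k \<ge> 1"
  proof (rule qmu_mono_barrier_weight[OF _ b_nonneg])
    show "strict_feas m c (x k)" using dom[of k] by simp
    have "mu k \<le> \<theta>\<mu> * mu (k - 1)" using upd[of "k - 1"] that by simp
    also have "\<dots> \<le> mu (k - 1)" using \<theta>(4) mu_pos[of "k - 1"] by simp
    finally show "mu k \<le> mu (k - 1)" .
  qed
  moreover have "qfun f g ?w \<le> ?Q k ?w"
    using w(1) b_nonneg mu_pos[of k] by (intro qfun_le_qmu) auto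
  moreover have "\<forall>i<m. y (Suc k) i \<ge> 0"
    using mult[of k] mu_pos[of k] db_pos w(1) unfolding strict_feas_def by (simp add: less_imp_le)
  ultimately show ?thesis
    using descent[of k] w
      ipfb_returns_barrier_stationary[OF inner[of k] \<gamma>0(1) \<alpha>(2) \<beta>(1) g_w f_grad c_grad b_deriv]
    by (simp add: y_sum qfun_def)
qed

end
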